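(* Let $1\le p<\infty$ and $\alpha>0$, and consider the differentiation operator $Df=f'$ on $\mathcal{F}^p_{(\alpha,1)}$ (where it is bounded). Then the closed disc $\{\lambda\in\mathbb{C}:|\lambda|\le\alpha\}$ is contained in the spectrum $\sigma(D)$ of $D$ on $\mathcal{F}^p_{(\alpha,1)}$.
   Context: For $\alpha>0$, $m>0$ and $1\le p<\infty$, $\mathcal{F}^p_{(\alpha,m)}$ denotes the Banach space of entire functions $f$ on $\mathbb{C}$ with $\|f\|_{(p,\alpha,m)}^p=\int_{\mathbb{C}}|f(z)|^pe^{-p\alpha|z|^m}\,dA(z)<\infty$, where $dA$ is Lebesgue area measure. *)

theory Defs
  imports "HOL-Analysis.Analysis"
begin

definition fock_space :: "real \<Rightarrow> real \<Rightarrow> real \<Rightarrow> (complex \<Rightarrow> complex) set" where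
  "fock_space p \<alpha> m = {f. f holomorphic_on UNIV \<and>
     integrable lborel (\<lambda>z. cmod (f z) powr p * exp (- p * \<alpha> * cmod z powr m))}"

definition fock_norm :: "real \<Rightarrow> real \<Rightarrow> real \<Rightarrow> (complex \<Rightarrow> complex) \<Rightarrow> real" where
  "fock_norm p \<alpha> m f =
     (LINT z|lborel. cmod (f z) powr p * exp (- p * \<alpha> * cmod z powr m)) powr (1 / p)"

definition op_spectrum ::
  "(complex \<Rightarrow> complex) set \<Rightarrow> ((complex \<Rightarrow> complex) \<Rightarrow> real)
     \<Rightarrow> ((complex \<Rightarrow> complex) \<Rightarrow> (complex \<Rightarrow> complex)) \<Rightarrow> complex set" where
  "op_spectrum X N T = {w. \<not> (\<exists>S.
      (\<forall>f\<in>X. S f \<in> X) \<and>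
      (\<forall>f\<in>X. \<forall>g\<in>X. \<forall>a b. S (\<lambda>z. a * f z + b * g z) = (\<lambda>z. a * S f z + b * S g z)) \<and>
      (\<exists>C. \<forall>f\<in>X. N (S f) \<le> C * N f) \<and>
      (\<forall>f\<in>X. (\<lambda>z. T (S f) z - w * S f z) = f) \<and>
      (\<forall>f\<in>X. S (\<lambda>z. T f z - w * f z) = f))}"

end

theory Submission
  imports Defs "HOL-Probability.Sinc_Integral"
begin

text \<open>For \<open>|w| \<le> \<alpha>\<close> the exponentials \<open>e\<^sub>v(z) = exp (v z)\<close> with \<open>|v| < \<alpha>\<close> lie in
  \<open>F\<^sup>p\<^sub>(\<alpha>,1)\<close> and satisfy \<open>(D - w) e\<^sub>v = (v - w) e\<^sub>v\<close>. Letting \<open>v \<rightarrow> w\<close> inside the open disc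
  exhibits \<open>w\<close> as an approximate eigenvalue of \<open>D\<close>, and a bounded inverse of \<open>D - w\<close>
  would have to map \<open>(v - w) e\<^sub>v\<close> back to \<open>e\<^sub>v\<close>, forcing its norm to be at least
  \<open>1 / |v - w|\<close>.\<close>

lemma approximate_eigenvalue_in_op_spectrum:
  assumes hom: "\<And>c f. f \<in> X \<Longrightarrow> N (\<lambda>z. c * f z) = cmod c * N f"
    and approx: "\<And>e. e > 0 \<Longrightarrow>
      \<exists>f\<in>X. \<exists>c. N f > 0 \<and> cmod c < e \<and> (\<lambda>z. T f z - w * f z) = (\<lambda>z. c * f z)"
  shows "w \<in> op_spectrum X N T"
  unfolding op_spectrum_def
proof clarify
  fix S C
  assume closed: "\<forall>f\<in>X. S f \<in> X"
    and lin: "\<forall>f\<in>X. \<forall>g\<in>X. \<forall>a b. S (\<lambda>z. a * f z + b * g z) = (\<lambda>z. a * S f z + b * S g z)"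
    and bd: "\<forall>f\<in>X. N (S f) \<le> C * N f"
    and inv: "\<forall>f\<in>X. S (\<lambda>z. T f z - w * f z) = f"
  have "1 / (\<bar>C\<bar> + 1) > 0"
    by simp
  then obtain f c where f: "f \<in> X" "N f > 0" and c: "cmod c < 1 / (\<bar>C\<bar> + 1)"
    and eigen: "(\<lambda>z. T f z - w * f z) = (\<lambda>z. c * f z)"
    using approx by blast
  have "f = S (\<lambda>z. c * f z)"
    using inv f(1) eigen by metis
  also have "\<dots> = (\<lambda>z. c * S f z)"
    using lin[rule_format, OF f(1) f(1), of c 0] by simp
  finally have "N f = cmod c * N (S f)"
    using hom closed f by metis
  also have "\<dots> \<le> cmod c * (\<bar>C\<bar> * N f)"
    using bd f by (intro mult_left_mono) (auto intro: order_trans abs_ge_self mult_right_mono)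
  also have "\<dots> < N f"
  proof -
    have "cmod c * \<bar>C\<bar> < 1"
      using c by (simp add: field_simps) (smt (verit) mult_left_mono norm_ge_zero)
    then show ?thesis
      using f by (simp add: mult.assoc[symmetric])
  qed
  finally show False by simp
qed

lemma integrable_exp_neg_abs:
  fixes k :: real
  assumes "k > 0"
  shows "integrable lborel (\<lambda>x::real. exp (- k * \<bar>x\<bar>))"
proof -
  \<comment> \<open>The indicator of \<open>[-1, 1]\<close> only serves to cover the point \<open>x = 0\<close>.\<close>
  define h :: "real \<Rightarrow> real" where
    "h x = indicator {0<..} x * exp (- (x * k)) + indicator {0<..} (- x) * exp (- (- x * k))
      + indicator {-1..1} x" for x
  have right: "integrable lborel (\<lambda>x::real. indicator {0<..} x * exp (- (x * k)))"
    using integrable_I0i_exp_mscale[OF assms] by (simp add: set_integrable_def mult.commute)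
  then have left: "integrable lborel (\<lambda>x::real. indicator {0<..} (- x) * exp (- (- x * k)))"
    using lborel_integrable_real_affine_iff[of "-1" "\<lambda>x. indicator {0<..} x * exp (- (x * k))" 0]
    by simp
  have "integrable lborel (indicator {-1..1} :: real \<Rightarrow> real)"
    by (simp add: integrable_indicator_iff emeasure_lborel_cbox_eq)
  with left right have dom: "integrable lborel h"
    unfolding h_def by (intro Bochner_Integration.integrable_add)
  have bound: "norm (exp (- k * \<bar>x\<bar>)) \<le> norm (h x)" for x
    by (cases x "0 :: real" rule: linorder_cases) (simp_all add: h_def indicator_def mult.commute)
  show ?thesis
    by (rule Bochner_Integration.integrable_bound[OF dom]) (measurable, intro AE_I2 bound)
qed

text \<open>Since \<open>\<bar>z \<bullet> b\<bar> \<le> \<parallel>z\<parallel>\<close>, the integrand is dominated by the product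
  \<open>\<Prod>b\<in>Basis. exp (- k \<bar>z \<bullet> b\<bar>)\<close> with \<open>k = c / DIM('a)\<close>, which is integrable by Fubini.\<close>
lemma integrable_exp_neg_norm:
  fixes c :: real
  assumes c: "c > 0"
  shows "integrable lborel (\<lambda>z::'a::euclidean_space. exp (- c * norm z))"
proof -
  define k where "k = c / real DIM('a)"
  have k: "k > 0"
    using c by (simp add: k_def)
  interpret product_sigma_finite "\<lambda>_. lborel"
    by standard
  have coord: "(\<Sum>b'\<in>Basis. f b' *\<^sub>R b') \<bullet> b = f b" if "b \<in> Basis" for f :: "'a \<Rightarrow> real" and b
    using that by (simp add: inner_sum_left inner_Basis if_distrib cong: if_cong)
  have "integrable (Pi\<^sub>M Basis (\<lambda>_. lborel)) (\<lambda>f. \<Prod>b\<in>Basis. exp (- k * \<bar>f b\<bar>))"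
    using integrable_exp_neg_abs[OF k] by (intro product_integrable_prod) auto
  then have "integrable (distr (Pi\<^sub>M Basis (\<lambda>_. lborel)) borel (\<lambda>f. \<Sum>b\<in>Basis. f b *\<^sub>R b))
      (\<lambda>z::'a. \<Prod>b\<in>Basis. exp (- k * \<bar>z \<bullet> b\<bar>))"
    by (subst integrable_distr_eq) (simp_all add: coord cong: prod.cong)
  then have dom: "integrable lborel (\<lambda>z::'a. \<Prod>b\<in>Basis. exp (- k * \<bar>z \<bullet> b\<bar>))"
    by (simp add: lborel_eq[symmetric])
  have bound: "exp (- c * norm z) \<le> (\<Prod>b\<in>Basis. exp (- k * \<bar>z \<bullet> b\<bar>))" for z :: 'a
  proof -
    have "(\<Sum>b\<in>Basis. k * \<bar>z \<bullet> b\<bar>) \<le> (\<Sum>b\<in>(Basis::'a set). k * norm z)"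
      using k by (intro sum_mono mult_left_mono) (auto simp: Basis_le_norm)
    then show ?thesis
      by (simp add: exp_sum[symmetric] k_def sum_negf)
  qed
  show ?thesis
    by (rule Bochner_Integration.integrable_bound[OF dom])
      (measurable, intro AE_I2, insert bound, simp add: prod_nonneg)
qed

lemma fock_norm_cmult:
  assumes "p > 0"
  shows "fock_norm p \<alpha> m (\<lambda>z. c * f z) = cmod c * fock_norm p \<alpha> m f"
proof -
  let ?I = "LINT z|lborel. cmod (f z) powr p * exp (- p * \<alpha> * cmod z powr m)"
  have "(LINT z|lborel. cmod (c * f z) powr p * exp (- p * \<alpha> * cmod z powr m)) = cmod c powr p * ?I"
    by (simp add: norm_mult powr_mult mult.assoc)
  moreover have "?I \<ge> 0"
    by (rule Bochner_Integration.integral_nonneg) simp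
  ultimately show ?thesis
    using assms by (simp add: fock_norm_def powr_mult powr_powr)
qed

lemma exp_mult_in_fock_space:
  assumes p: "p > 0" and v: "cmod v < \<alpha>"
  shows "(\<lambda>z. exp (v * z)) \<in> fock_space p \<alpha> 1"
proof -
  have integrand: "cmod (exp (v * z)) powr p * exp (- p * \<alpha> * cmod z powr 1)
      = exp (p * Re (v * z) - p * \<alpha> * cmod z)" for z
    by (simp add: norm_exp_eq_Re powr_def exp_add[symmetric] algebra_simps)
  have dom: "integrable lborel (\<lambda>z::complex. exp (- (p * (\<alpha> - cmod v)) * norm z))"
    using p v by (intro integrable_exp_neg_norm) auto
  have bound: "exp (p * Re (v * z) - p * \<alpha> * cmod z) \<le> exp (- (p * (\<alpha> - cmod v)) * norm z)" for z
  proof -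
    have "p * Re (v * z) \<le> p * (cmod v * cmod z)"
      using p complex_Re_le_cmod[of "v * z"] by (intro mult_left_mono) (auto simp: norm_mult)
    then show ?thesis
      by (simp add: algebra_simps)
  qed
  have "integrable lborel (\<lambda>z. exp (p * Re (v * z) - p * \<alpha> * cmod z))"
    by (rule Bochner_Integration.integrable_bound[OF dom]) (measurable, intro AE_I2, insert bound, simp)
  then have "integrable lborel (\<lambda>z. cmod (exp (v * z)) powr p * exp (- p * \<alpha> * cmod z powr 1))"
    unfolding integrand .
  then show ?thesis
    unfolding fock_space_def by (auto intro!: holomorphic_intros)
qed

lemma fock_norm_exp_mult_pos:
  assumes p: "p > 0" and v: "cmod v < \<alpha>"
  shows "fock_norm p \<alpha> 1 (\<lambda>z. exp (v * z)) > 0"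
proof -
  define g where "g = (\<lambda>z. cmod (exp (v * z)) powr p * exp (- p * \<alpha> * cmod z powr 1))"
  have int: "integrable lborel g"
    using exp_mult_in_fock_space[OF p v] unfolding fock_space_def g_def by blast
  have pos: "g z > 0" for z
    by (simp add: g_def)
  have "integral\<^sup>L lborel g \<noteq> 0"
  proof
    assume "integral\<^sup>L lborel g = 0"
    then have "AE z in lborel. g z = 0"
      using integral_nonneg_eq_0_iff_AE[OF int] pos by (simp add: less_imp_le)
    then have "AE z in (lborel :: complex measure). False"
      using pos by (auto elim: AE_mp simp: less_le)
    then show False
      using ae_filter_eq_bot_iff[of "lborel :: complex measure"]
        trivial_limit_def[of "ae_filter (lborel :: complex measure)"]
      by simp
  qed
  moreover have "integral\<^sup>L lborel g \<ge> 0"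
    using pos by (intro Bochner_Integration.integral_nonneg) (simp add: less_imp_le)
  ultimately show ?thesis
    unfolding fock_norm_def g_def[symmetric] by simp
qed

theorem mainTheorem3:
  fixes p \<alpha> :: real
  assumes "1 \<le> p" and "\<alpha> > 0"
  shows "cball 0 \<alpha> \<subseteq> op_spectrum (fock_space p \<alpha> 1) (fock_norm p \<alpha> 1) deriv"
proof
  fix w
  assume "w \<in> cball (0 :: complex) \<alpha>"
  then have w: "w \<in> closure (ball 0 \<alpha>)"
    using \<open>\<alpha> > 0\<close> by simp
  have p: "p > 0"
    using \<open>1 \<le> p\<close> by simp
  show "w \<in> op_spectrum (fock_space p \<alpha> 1) (fock_norm p \<alpha> 1) deriv"
  proof (rule approximate_eigenvalue_in_op_spectrum)
    show "fock_norm p \<alpha> 1 (\<lambda>z. c * f z) = cmod c * fock_norm p \<alpha> 1 f" for c f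
      using p by (rule fock_norm_cmult)
    fix e :: real
    assume "e > 0"
    then obtain v where v: "cmod v < \<alpha>" "cmod (v - w) < e"
      using w by (auto simp: closure_approachable dist_norm)
    have "deriv (\<lambda>z. exp (v * z)) z = v * exp (v * z)" for z
      by (rule DERIV_imp_deriv) (auto intro!: derivative_eq_intros)
    then have "(\<lambda>z. deriv (\<lambda>z. exp (v * z)) z - w * exp (v * z)) = (\<lambda>z. (v - w) * exp (v * z))"
      by (simp add: algebra_simps)
    then show "\<exists>f\<in>fock_space p \<alpha> 1. \<exists>c. fock_norm p \<alpha> 1 f > 0 \<and> cmod c < e \<and>
        (\<lambda>z. deriv f z - w * f z) = (\<lambda>z. c * f z)"
      using v exp_mult_in_fock_space[OF p v(1)] fock_norm_exp_mult_pos[OF p v(1)] by blast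
  qed
qed

end
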